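(* Let $G_0$ be a directed multigraph on vertex set $\{0,1,\dots,n+1\}$, each edge $(p,q)$ oriented $p\to q$ with $p<q$, and suppose $(i,j),(j,k)\in E(G_0)$ for some $i<j<k$. Let $G_1$ and $G_2$ be the multigraphs on the same vertex set with edge multisets $$E(G_1)=E(G_0)\setminus\{(j,k)\}\cup\{(i,k)\},\qquad E(G_2)=E(G_0)\setminus\{(i,j)\}\cup\{(i,k)\}$$ (one copy removed, one copy added). For $r\in[n]$ let $d_r=\operatorname{indeg}_{G_0}(r)-1$, $d_r'=\operatorname{indeg}_{G_1}(r)-1$, $d_r''=\operatorname{indeg}_{G_2}(r)-1$, and set $\mathbf d=(0,d_1,\dots,d_n,-\sum_{r=1}^n d_r)$, $\mathbf d_1=(0,d'_1,\dots,d'_n,-\sum_{r=1}^n d'_r)$, $\mathbf d_2=(0,d''_1,\dots,d''_n,-\sum_{r=1}^n d''_r)$. Then $$K_{G_0}(\mathbf d)=K_{G_1}(\mathbf d_1)+K_{G_2}(\mathbf d_2).$$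
   Context: For a directed multigraph $G$ on $\{0,\dots,n+1\}$ and a vector $\mathbf a=(a_0,\dots,a_{n+1})$ with $\sum_i a_i=0$, the flow polytope $\mathcal F_G(\mathbf a)$ is the set of $f\in\mathbb R_{\ge0}^{E(G)}$ such that at each vertex $v$ the net flow (outgoing minus incoming) equals $a_v$, and $K_G(\mathbf a)$ is the number of integer points of $\mathcal F_G(\mathbf a)$. *)

theory Defs
  imports Main
begin

text \<open>A directed multigraph on vertices {0..n+1} is represented by a list of edges
  (p, q) (each list entry is one copy of the edge; the order of the list is irrelevant).
  An integer flow assigns a natural number to each edge copy (list index); it is
  zero outside the index range.\<close>

definition net_flow :: "(nat \<times> nat) list \<Rightarrow> (nat \<Rightarrow> nat) \<Rightarrow> nat \<Rightarrow> int" where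
  "net_flow E f v =
     (\<Sum>e<length E. if fst (E ! e) = v then int (f e) else 0)
   - (\<Sum>e<length E. if snd (E ! e) = v then int (f e) else 0)"

definition flow_int_points :: "nat \<Rightarrow> (nat \<times> nat) list \<Rightarrow> (nat \<Rightarrow> int) \<Rightarrow> (nat \<Rightarrow> nat) set" where
  "flow_int_points n E a =
     {f. (\<forall>e. length E \<le> e \<longrightarrow> f e = 0) \<and> (\<forall>v \<le> n + 1. net_flow E f v = a v)}"

definition K :: "nat \<Rightarrow> (nat \<times> nat) list \<Rightarrow> (nat \<Rightarrow> int) \<Rightarrow> nat" where
  "K n E a = card (flow_int_points n E a)"

definition indeg :: "(nat \<times> nat) list \<Rightarrow> nat \<Rightarrow> nat" where
  "indeg E r = length (filter (\<lambda>e. snd e = r) E)"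

definition dvec :: "nat \<Rightarrow> (nat \<times> nat) list \<Rightarrow> nat \<Rightarrow> int" where
  "dvec n E v =
     (if v = 0 then 0
      else if v \<le> n then int (indeg E v) - 1
      else if v = n + 1 then - (\<Sum>r=1..n. int (indeg E r) - 1)
      else 0)"

end

theory Submission
  imports Defs "HOL-Combinatorics.Permutations"
begin

text \<open>Compare the flows x on (i,j) and y on (j,k) of an integer flow on G0. If x \<ge> y,
  rerouting the y units of the path i \<rightarrow> j \<rightarrow> k along (i,k) gives a flow on G1 with the same net
  flows. If x < y, sending x units along (i,k) and y - x - 1 along (j,k) gives a flow on G2 whose
  net flow is one less at j and one more at k: exactly the difference between d and d2, as G2 arises
  from G0 by moving the head of one edge from j to k. The counts are
  finite because all edges point upwards, so the weighted sum of the net flows, the sum of v a(v),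
  equals minus the sum of f(e) (head e - tail e), which bounds every edge flow. Since K and d only
  depend on the multiset of edges, the two edges may be moved to the front of the list.\<close>

definition forward_edges :: "nat \<Rightarrow> (nat \<times> nat) list \<Rightarrow> bool" where
  "forward_edges n E \<longleftrightarrow> (\<forall>(p, q) \<in> set E. p < q \<and> q \<le> n + 1)"

lemma sum_weighted_net_flow:
  assumes "forward_edges n E"
  shows "(\<Sum>v\<le>n+1. int v * net_flow E f v)
       = (\<Sum>e<length E. int (f e) * (int (fst (E!e)) - int (snd (E!e))))"
proof -
  have ends: "fst (E!e) \<le> n+1" "snd (E!e) \<le> n+1" if "e < length E" for e
    using assms nth_mem[OF that] unfolding forward_edges_def by fastforce+
  have weighted_delta: "(\<Sum>v\<le>n+1. if u = v then int v * x else 0) = int u * x"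
    if "u \<le> n+1" for u x using that by (subst sum.delta') auto
  have "(\<Sum>v\<le>n+1. int v * net_flow E f v)
      = (\<Sum>v\<le>n+1. \<Sum>e<length E. if fst (E!e) = v then int v * int (f e) else 0)
      - (\<Sum>v\<le>n+1. \<Sum>e<length E. if snd (E!e) = v then int v * int (f e) else 0)"
    unfolding net_flow_def
    by (simp add: right_diff_distrib sum_distrib_left sum_subtractf if_distrib cong: if_cong)
  also have "\<dots> = (\<Sum>e<length E. \<Sum>v\<le>n+1. if fst (E!e) = v then int v * int (f e) else 0)
      - (\<Sum>e<length E. \<Sum>v\<le>n+1. if snd (E!e) = v then int v * int (f e) else 0)"
    by (simp only: sum.swap[of _ "{..n+1}"])
  also have "\<dots> = (\<Sum>e<length E. int (fst (E!e)) * int (f e)) - (\<Sum>e<length E. int (snd (E!e)) * int (f e))"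
    by (intro arg_cong2[where f = minus] sum.cong) (simp_all only: weighted_delta ends lessThan_iff)
  finally show ?thesis by (simp add: sum_subtractf[symmetric] algebra_simps)
qed

lemma flow_int_points_bounded:
  assumes "forward_edges n E" and f: "f \<in> flow_int_points n E a" and e: "e < length E"
  shows "f e \<le> nat (- (\<Sum>v\<le>n+1. int v * a v))"
proof -
  define gain where "gain e' = int (f e') * (int (snd (E!e')) - int (fst (E!e')))" for e'
  have gain_ge: "int (f e') \<le> gain e'" if "e' < length E" for e'
  proof -
    have "int (snd (E!e')) - int (fst (E!e')) \<ge> 1"
      using assms(1) nth_mem[OF that] unfolding forward_edges_def by fastforce
    then show ?thesis unfolding gain_def by (simp add: mult_le_cancel_left1)
  qed
  have "(\<Sum>v\<le>n+1. int v * a v) = (\<Sum>v\<le>n+1. int v * net_flow E f v)"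
    using f unfolding flow_int_points_def by simp
  also have "\<dots> = - (\<Sum>e'<length E. gain e')"
    unfolding sum_weighted_net_flow[OF assms(1)] gain_def by (simp add: sum_negf[symmetric] algebra_simps)
  finally have "(\<Sum>e'<length E. gain e') = - (\<Sum>v\<le>n+1. int v * a v)" by simp
  moreover have "gain e \<le> (\<Sum>e'<length E. gain e')"
    using e by (intro member_le_sum) (auto intro: order_trans[OF _ gain_ge])
  ultimately show ?thesis using gain_ge[OF e] by linarith
qed

lemma finite_flow_int_points:
  assumes "forward_edges n E"
  shows "finite (flow_int_points n E a)"
proof -
  define B where "B = nat (- (\<Sum>v\<le>n+1. int v * a v))"
  have "inj_on (\<lambda>f. restrict f {..<length E}) (flow_int_points n E a)"
  proof (rule inj_onI, rule ext)
    fix f g e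
    assume "f \<in> flow_int_points n E a" "g \<in> flow_int_points n E a"
      and "restrict f {..<length E} = restrict g {..<length E}"
    then show "f e = g e"
      unfolding flow_int_points_def by (cases "e < length E") (auto dest: fun_cong[of _ _ e])
  qed
  moreover have "(\<lambda>f. restrict f {..<length E}) ` flow_int_points n E a \<subseteq> PiE {..<length E} (\<lambda>_. {..B})"
    using flow_int_points_bounded[OF assms] unfolding B_def by (intro image_subsetI) (simp add: restrict_PiE_iff)
  ultimately show ?thesis
    by (rule inj_on_finite) (simp add: finite_PiE)
qed

lemma net_flow_permute_list:
  assumes p: "p permutes {..<length E}"
  shows "net_flow (permute_list p E) (f \<circ> p) v = net_flow E f v"
proof -
  have bij: "bij_betw p {..<length E} {..<length E}" using permutes_imp_bij[OF p] .
  have "(\<Sum>e<length E. if h (permute_list p E ! e) = v then int ((f \<circ> p) e) else 0)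
      = (\<Sum>e<length E. if h (E ! e) = v then int (f e) else 0)" for h :: "nat \<times> nat \<Rightarrow> nat"
  proof -
    have "(\<Sum>e<length E. if h (permute_list p E ! e) = v then int ((f \<circ> p) e) else 0)
        = (\<Sum>e<length E. (\<lambda>e. if h (E ! e) = v then int (f e) else 0) (p e))"
      by (rule sum.cong) (simp_all add: permute_list_nth[OF p])
    also have "\<dots> = (\<Sum>e<length E. if h (E ! e) = v then int (f e) else 0)"
      by (rule sum.reindex_bij_betw[OF bij])
    finally show ?thesis .
  qed
  then show ?thesis unfolding net_flow_def by simp
qed

lemma K_permute_list:
  assumes p: "p permutes {..<length E}"
  shows "K n (permute_list p E) a = K n E a"
proof -
  have p_inv: "inv p permutes {..<length E}" using permutes_inv[OF p] .
  have "bij_betw (\<lambda>f. f \<circ> p) (flow_int_points n E a) (flow_int_points n (permute_list p E) a)"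
  proof (rule bij_betw_byWitness[where f' = "\<lambda>g. g \<circ> inv p"])
    show "\<forall>f\<in>flow_int_points n E a. f \<circ> p \<circ> inv p = f"
      by (simp add: comp_assoc permutes_inv_o[OF p])
    show "\<forall>g\<in>flow_int_points n (permute_list p E) a. g \<circ> inv p \<circ> p = g"
      by (simp add: comp_assoc permutes_inv_o[OF p])
    show "(\<lambda>f. f \<circ> p) ` flow_int_points n E a \<subseteq> flow_int_points n (permute_list p E) a"
      using permutes_not_in[OF p] by (auto simp: flow_int_points_def net_flow_permute_list[OF p])
    have "net_flow E (g \<circ> inv p) v = net_flow (permute_list p E) g v" for g v
      using net_flow_permute_list[OF p, of "g \<circ> inv p"] by (simp add: comp_assoc permutes_inv_o[OF p])
    then show "(\<lambda>g. g \<circ> inv p) ` flow_int_points n (permute_list p E) a \<subseteq> flow_int_points n E a"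
      using permutes_not_in[OF p_inv] by (auto simp: flow_int_points_def)
  qed
  then show ?thesis unfolding K_def by (simp add: bij_betw_same_card)
qed

lemma K_mset_eq:
  assumes "mset E = mset E'"
  shows "K n E a = K n E' a"
  using mset_eq_permutation[OF assms] K_permute_list by metis

lemma indeg_eq_count_heads: "indeg E r = count (mset (map snd E)) r"
  unfolding indeg_def by (induction E) auto

lemma dvec_cong_heads:
  assumes "mset (map snd E) = mset (map snd E')"
  shows "dvec n E = dvec n E'"
  unfolding dvec_def indeg_eq_count_heads assms ..

lemma dvec_mset_eq:
  assumes "mset E = mset E'"
  shows "dvec n E = dvec n E'"
  by (rule dvec_cong_heads) (simp add: assms mset_map)

definition edge_net_flow :: "nat \<times> nat \<Rightarrow> nat \<Rightarrow> nat \<Rightarrow> int" where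
  "edge_net_flow e x v = (if fst e = v then int x else 0) - (if snd e = v then int x else 0)"

lemma net_flow_Cons: "net_flow (e # E) f v = edge_net_flow e (f 0) v + net_flow E (\<lambda>m. f (Suc m)) v"
  unfolding net_flow_def edge_net_flow_def
  by (simp only: length_Cons sum.lessThan_Suc_shift nth_Cons_0 nth_Cons_Suc)

lemma flow_int_points_Cons2:
  "f \<in> flow_int_points n (e1 # e2 # E) a \<longleftrightarrow>
    (\<forall>e. Suc (Suc (length E)) \<le> e \<longrightarrow> f e = 0) \<and>
    (\<forall>v\<le>n+1. edge_net_flow e1 (f 0) v + edge_net_flow e2 (f 1) v
               + net_flow E (\<lambda>m. f (Suc (Suc m))) v = a v)"
  unfolding flow_int_points_def by (simp add: net_flow_Cons add.assoc)

lemma K_split: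
  assumes fwd: "forward_edges n ((i, j) # (j, k) # E)" and "i < j" "j < k"
    and a': "\<forall>v\<le>n+1. a' v = a v - (if v = j then 1 else 0) + (if v = k then 1 else 0)"
  shows "K n ((i, j) # (j, k) # E) a = K n ((i, j) # (i, k) # E) a + K n ((i, k) # (j, k) # E) a'"
proof -
  define F0 where "F0 = flow_int_points n ((i, j) # (j, k) # E) a"
  define F1 where "F1 = flow_int_points n ((i, j) # (i, k) # E) a"
  define F2 where "F2 = flow_int_points n ((i, k) # (j, k) # E) a'"
  define A where "A = {f \<in> F0. f 1 \<le> f 0}"
  define B where "B = {f \<in> F0. f 0 < f 1}"
  have "finite F0" unfolding F0_def by (rule finite_flow_int_points[OF fwd])
  moreover have "F0 = A \<union> B" "A \<inter> B = {}" unfolding A_def B_def by auto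
  ultimately have card_F0: "card F0 = card A + card B"
    by (simp add: card_Un_disjoint)
  have reroute: "edge_net_flow (i, j) x v + edge_net_flow (i, k) y v
               = edge_net_flow (i, j) (x + y) v + edge_net_flow (j, k) y v" for x y v
    using \<open>i < j\<close> \<open>j < k\<close> by (auto simp: edge_net_flow_def)
  have reroute_back: "edge_net_flow (i, j) (x - y) v + edge_net_flow (i, k) y v
               = edge_net_flow (i, j) x v + edge_net_flow (j, k) y v" if "y \<le> x" for x y v
    using reroute[of "x - y" v y] that by simp
  have shift: "edge_net_flow (i, k) x v + edge_net_flow (j, k) y v
      = edge_net_flow (i, j) x v + edge_net_flow (j, k) (y + x + 1) v
        - (if v = j then 1 else 0) + (if v = k then 1 else 0)" for x y v
    using \<open>i < j\<close> \<open>j < k\<close> by (auto simp: edge_net_flow_def)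
  have shift_back: "edge_net_flow (i, k) x v + edge_net_flow (j, k) (y - Suc x) v
      = edge_net_flow (i, j) x v + edge_net_flow (j, k) y v
        - (if v = j then 1 else 0) + (if v = k then 1 else 0)" if "x < y" for x y v
    using shift[of x v "y - Suc x"] that by simp
  have "bij_betw (\<lambda>f. f(0 := f 0 - f 1)) A F1"
  proof (rule bij_betw_byWitness[where f' = "\<lambda>g. g(0 := g 0 + g 1)"])
    show "(\<lambda>f. f(0 := f 0 - f 1)) ` A \<subseteq> F1"
      unfolding A_def F0_def F1_def by (auto simp: flow_int_points_Cons2 reroute_back)
    show "(\<lambda>g. g(0 := g 0 + g 1)) ` F1 \<subseteq> A"
      unfolding A_def F0_def F1_def by (auto simp: flow_int_points_Cons2 reroute)
  qed (auto simp: A_def)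
  moreover have "bij_betw (\<lambda>f. f(1 := f 1 - f 0 - 1)) B F2"
  proof (rule bij_betw_byWitness[where f' = "\<lambda>g. g(1 := g 1 + g 0 + 1)"])
    show "(\<lambda>f. f(1 := f 1 - f 0 - 1)) ` B \<subseteq> F2"
      unfolding B_def F0_def F2_def using a' \<open>j < k\<close>
      by (auto simp: flow_int_points_Cons2 shift_back add.assoc[symmetric])
    show "(\<lambda>g. g(1 := g 1 + g 0 + 1)) ` F2 \<subseteq> B"
      unfolding B_def F0_def F2_def using a' \<open>j < k\<close> by (auto simp: flow_int_points_Cons2 shift add.assoc)
  qed (auto simp: B_def)
  ultimately show ?thesis
    using card_F0 unfolding K_def F0_def F1_def F2_def by (simp add: bij_betw_same_card)
qed

lemma dvec_redirect_head:
  assumes "0 < j" "j \<le> n" "0 < k" "k \<le> n + 1" "v \<le> n + 1"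
  shows "dvec n ((i', k) # E) v = dvec n ((i, j) # E) v - (if v = j then 1 else 0) + (if v = k then 1 else 0)"
proof -
  have indeg_Cons: "int (indeg ((p, q) # E) r) - 1 = int (indeg E r) - 1 + (if q = r then 1 else 0)" for p q r
    unfolding indeg_def by simp
  have sum_Cons: "(\<Sum>r=1..n. int (indeg ((p, q) # E) r) - 1)
      = (\<Sum>r=1..n. int (indeg E r) - 1) + (if 0 < q \<and> q \<le> n then 1 else 0)" for p q
    unfolding indeg_Cons sum.distrib by (simp add: sum.delta)
  show ?thesis
    unfolding dvec_def sum_Cons using assms by (auto simp: indeg_def)
qed

lemma mset_two_edges_to_front:
  fixes E :: "('a \<times> 'a) list"
  assumes "(i, j) \<in> set E" "(j, k) \<in> set E" "(i, j) \<noteq> (j, k)"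
  obtains R where "mset E = mset ((i, j) # (j, k) # R)"
    "mset ((i, k) # remove1 (j, k) E) = mset ((i, j) # (i, k) # R)"
    "mset ((i, k) # remove1 (i, j) E) = mset ((i, k) # (j, k) # R)"
proof -
  have to_front: "mset xs = add_mset x (mset (remove1 x xs))" if "x \<in> set xs" for x :: "'a \<times> 'a" and xs
    using that by (simp add: insert_DiffM)
  define R where "R = remove1 (j, k) (remove1 (i, j) E)"
  have "(j, k) \<in> set (remove1 (i, j) E)" using assms(2,3) by (metis in_set_remove1)
  then have E: "mset E = mset ((i, j) # (j, k) # R)"
    unfolding R_def using to_front[OF assms(1)] to_front by (simp del: mset_remove1)
  show thesis
    by (rule that[OF E]) (simp_all add: E add_mset_commute)
qed

theorem lemma3p3:
  fixes n i j k :: nat and E0 :: "(nat \<times> nat) list"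
  assumes edges: "\<forall>(p, q) \<in> set E0. p < q \<and> q \<le> n + 1"
    and ij: "(i, j) \<in> set E0" and jk: "(j, k) \<in> set E0"
    and "i < j" and "j < k"
  shows "K n E0 (dvec n E0)
       = K n ((i, k) # remove1 (j, k) E0) (dvec n ((i, k) # remove1 (j, k) E0))
       + K n ((i, k) # remove1 (i, j) E0) (dvec n ((i, k) # remove1 (i, j) E0))"
proof -
  obtain R where m0: "mset E0 = mset ((i, j) # (j, k) # R)"
    and m1: "mset ((i, k) # remove1 (j, k) E0) = mset ((i, j) # (i, k) # R)"
    and m2: "mset ((i, k) # remove1 (i, j) E0) = mset ((i, k) # (j, k) # R)"
    using mset_two_edges_to_front[OF ij jk] \<open>i < j\<close> by blast
  have fwd: "forward_edges n ((i, j) # (j, k) # R)"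
    using edges unfolding forward_edges_def m0[THEN mset_eq_setD, symmetric] .
  have "k \<le> n + 1" using edges jk by auto
  then have d2: "\<forall>v\<le>n+1. dvec n ((i, k) # (j, k) # R) v
      = dvec n ((i, j) # (j, k) # R) v - (if v = j then 1 else 0) + (if v = k then 1 else 0)"
    using \<open>i < j\<close> \<open>j < k\<close> by (intro allI impI dvec_redirect_head) auto
  have "K n E0 (dvec n E0) = K n ((i, j) # (j, k) # R) (dvec n ((i, j) # (j, k) # R))"
    using K_mset_eq[OF m0] dvec_mset_eq[OF m0] by simp
  also have "\<dots> = K n ((i, j) # (i, k) # R) (dvec n ((i, j) # (j, k) # R))
                 + K n ((i, k) # (j, k) # R) (dvec n ((i, k) # (j, k) # R))"
    by (rule K_split[OF fwd \<open>i < j\<close> \<open>j < k\<close> d2])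
  also have "dvec n ((i, j) # (j, k) # R) = dvec n ((i, j) # (i, k) # R)"
    by (rule dvec_cong_heads) simp
  finally show ?thesis
    using K_mset_eq[OF m1] K_mset_eq[OF m2] dvec_mset_eq[OF m1] dvec_mset_eq[OF m2] by simp
qed

end
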